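(* Assume $$0<\Delta t\le\frac{C_a^3}{536\,C_S^2C_{ct}^4C_{tr}^8}.$$ Then there exist $\lambda_1\in(0,1)$, depending only on $\Delta t$, the parameters and the domains, and a constant $C$ independent of $n$, such that every solution of the BDF2 scheme satisfies, for all $n\ge1$, $$\|\bar\partial\vec{\mathbf u}^{n+1}\|^2\le C\lambda_1^n+C\max_i\|\bar\partial\vec{\mathbf f}^i\|^2,$$ where $\bar\partial\vec{\mathbf u}^{n+1}=(\vec{\mathbf u}^{n+1}-\vec{\mathbf u}^n)/\Delta t$ and $\bar\partial\vec{\mathbf f}^{i}=(\vec{\mathbf f}^{i}-\vec{\mathbf f}^{i-1})/\Delta t$.
   Context: Let $d\in\{2,3\}$, $\Omega_f,\Omega_p\subset\mathbb R^d$ bounded Lipschitz domains with disjoint interiors sharing the interface $\Gamma=\partial\Omega_f\cap\partial\Omega_p$; $\mathbf n_f$ is the unit outward normal of $\Omega_f$ on $\Gamma$, $\boldsymbol\tau$ a unit tangent on $\Gamma$ (for $d=3$ the tangential term is summed over $d-1$ tangent vectors). Parameters: $\nu,g,S,\alpha_{BJ}>0$, a symmetric positive definite matrix $\mathbb K$ with smallest eigenvalue $K_{\min}>0$, and $\gamma_f,\gamma_p\ge0$. Spaces: $\mathbf H_f=\{\mathbf v\in H^1(\Omega_f)^d:\mathbf v=0\text{ on }\partial\Omega_f\setminus\Gamma\}$, $H_p=\{\psi\in H^1(\Omega_p):\psi=0\text{ on }\partial\Omega_p\setminus\Gamma\}$, $Q=L^2(\Omega_f)$, $\mathbf W=\mathbf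 H_f\times H_p$, elements written $\vec{\mathbf u}=(\mathbf u,\phi)$, $\vec{\mathbf v}=(\mathbf v,\psi)$. Norms: $\|\vec{\mathbf v}\|^2=\|\mathbf v\|^2_{L^2(\Omega_f)}+\|\psi\|^2_{L^2(\Omega_p)}$, $\|\nabla\vec{\mathbf v}\|^2=\|\nabla\mathbf v\|^2_{L^2(\Omega_f)}+\|\nabla\psi\|^2_{L^2(\Omega_p)}$, $\|\vec{\mathbf v}\|_\Gamma^2=\|\mathbf v\|_{L^2(\Gamma)}^2+\|\psi\|_{L^2(\Gamma)}^2$. Forms: $\langle\langle\vec{\mathbf u},\vec{\mathbf v}\rangle\rangle=(\mathbf u,\mathbf v)_{\Omega_f}+gS(\phi,\psi)_{\Omega_p}$, $\|\vec{\mathbf v}\|_S=\langle\langle\vec{\mathbf v},\vec{\mathbf v}\rangle\rangle^{1/2}$; $a(\vec{\mathbf u},\vec{\mathbf v})=\nu(\nabla\mathbf u,\nabla\mathbf v)_{\Omega_f}+g(\mathbb K\nabla\phi,\nabla\psi)_{\Omega_p}+\alpha_{BJ}(\mathbf u\cdot\boldsymbol\tau,\mathbf v\cdot\boldsymbol\tau)_\Gamma$; $b(\mathbf v,q)=-(q,\nabla\cdot\mathbf v)_{\Omega_f}$; $a_\Gamma(\vec{\mathbf u},\vec{\mathbf v})=g(\phi,\mathbf v\cdot\mathbf n_f)_\Gamma-g(\mathbf u\cdot\mathbf n_f,\psi)_\Gamma$; $a_{st}(\vec{\mathbf u},\vec{\mathbf v})=\gamma_f(\mathbf u\cdot\mathbf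 n_f,\mathbf v\cdot\mathbf n_f)_\Gamma+\gamma_p(\phi,\psi)_\Gamma$; $\widetilde a_\Gamma=a_\Gamma-a_{st}$. A forcing pair is $\vec{\mathbf f}=(\mathbf f,f)\in L^2(\Omega_f)^d\times L^2(\Omega_p)$ with $\langle\langle\langle\vec{\mathbf f},\vec{\mathbf v}\rangle\rangle\rangle=(\mathbf f,\mathbf v)_{\Omega_f}+g(f,\psi)_{\Omega_p}$ and $\|\vec{\mathbf f}\|^2=\|\mathbf f\|^2+\|f\|^2$. Constants: $C_a=\min(\nu,gK_{\min})$; $C_S$ is a constant with $\|\vec{\mathbf v}\|\le C_S\|\vec{\mathbf v}\|_S$; $C_{tr}$ is a constant with $\|\vec{\mathbf v}\|_\Gamma\le C_{tr}(\|\vec{\mathbf v}\|\|\nabla\vec{\mathbf v}\|)^{1/2}$ and $\|\vec{\mathbf v}\|_\Gamma\le C_{tr}\|\nabla\vec{\mathbf v}\|$ for all $\vec{\mathbf v}\in\mathbf W$; $C_{ct}=\sqrt2\max\{\gamma_f,\gamma_p,g\}$. BDF2 scheme: given $\Delta t>0$, $\vec{\mathbf u}^0,\vec{\mathbf u}^1\in\mathbf W$ and forcing pairs $\vec{\mathbf f}^n$, for each $n\ge1$ the pair $(\vec{\mathbf u}^{n+1},p^{n+1})\in\mathbf W\times Q$ satisfies, for all $\vec{\mathbf v}\in\mathbf W$, $q\in Q$, $\langle\langle\frac{3\vec{\mathbf u}^{n+1}-4\vec{\mathbf u}^n+\vec{\mathbf u}^{n-1}}{2\Delta t},\vec{\mathbf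 v}\rangle\rangle+a(\vec{\mathbf u}^{n+1},\vec{\mathbf v})+b(\mathbf v,p^{n+1})+a_{st}(\vec{\mathbf u}^{n+1},\vec{\mathbf v})=\langle\langle\langle\vec{\mathbf f}^{n+1},\vec{\mathbf v}\rangle\rangle\rangle-\widetilde a_\Gamma(2\vec{\mathbf u}^n-\vec{\mathbf u}^{n-1},\vec{\mathbf v})$, and $b(\mathbf u^{n+1},q)=0$. *)

theory Defs
  imports "HOL-Analysis.Analysis"
begin

text \<open>Notation of the arguments:
   Ef : H_f -> L2(Omega_f)^d       (inclusion)
   Ep : H_p -> L2(Omega_p)         (inclusion)
   Df : H_f -> L2(Omega_f)^(d x d) (gradient)
   Dp : H_p -> L2(Omega_p)^d       (gradient)
   Tf : H_f -> L2(Gamma)^d         (trace)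
   Tp : H_p -> L2(Gamma)           (trace)
   Nn : L2(Gamma)^d -> L2(Gamma)   (w |-> w . n_f)
   Tt : L2(Gamma)^d -> L2(Gamma)^(d-1) (w |-> (w . tau_i)_i)
   Dv : H_f -> Q = L2(Omega_f)     (divergence)
   K  : L2(Omega_p)^d -> L2(Omega_p)^d (multiplication by the matrix K)\<close>

definition Kmin :: "('gp::real_inner \<Rightarrow> 'gp) \<Rightarrow> real" where
  "Kmin K = Inf {(K x \<bullet> x) / (norm x)\<^sup>2 | x. x \<noteq> 0}"

definition nrm2 :: "('hf \<Rightarrow> 'lf::real_inner) \<Rightarrow> ('hp \<Rightarrow> 'lp::real_inner) \<Rightarrow> 'hf \<times> 'hp \<Rightarrow> real" where
  "nrm2 Ef Ep w = (norm (Ef (fst w)))\<^sup>2 + (norm (Ep (snd w)))\<^sup>2"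

definition ipS :: "('hf \<Rightarrow> 'lf::real_inner) \<Rightarrow> ('hp \<Rightarrow> 'lp::real_inner) \<Rightarrow> real \<Rightarrow> real \<Rightarrow>
    'hf \<times> 'hp \<Rightarrow> 'hf \<times> 'hp \<Rightarrow> real" where
  "ipS Ef Ep g S u v = Ef (fst u) \<bullet> Ef (fst v) + g * S * (Ep (snd u) \<bullet> Ep (snd v))"

definition ipF :: "('hf \<Rightarrow> 'lf::real_inner) \<Rightarrow> ('hp \<Rightarrow> 'lp::real_inner) \<Rightarrow> real \<Rightarrow>
    'lf \<times> 'lp \<Rightarrow> 'hf \<times> 'hp \<Rightarrow> real" where
  "ipF Ef Ep g f v = fst f \<bullet> Ef (fst v) + g * (snd f \<bullet> Ep (snd v))"

definition fnrm2 :: "'lf::real_inner \<times> 'lp::real_inner \<Rightarrow> real" where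
  "fnrm2 f = (norm (fst f))\<^sup>2 + (norm (snd f))\<^sup>2"

definition aform :: "('hf \<Rightarrow> 'gf::real_inner) \<Rightarrow> ('hp \<Rightarrow> 'gp::real_inner) \<Rightarrow> ('gp \<Rightarrow> 'gp) \<Rightarrow>
    ('hf \<Rightarrow> 'tv::real_inner) \<Rightarrow> ('tv \<Rightarrow> 'tt::real_inner) \<Rightarrow> real \<Rightarrow> real \<Rightarrow> real \<Rightarrow>
    'hf \<times> 'hp \<Rightarrow> 'hf \<times> 'hp \<Rightarrow> real" where
  "aform Df Dp K Tf Tt \<nu> g \<alpha> u v =
     \<nu> * (Df (fst u) \<bullet> Df (fst v)) + g * (K (Dp (snd u)) \<bullet> Dp (snd v))
     + \<alpha> * (Tt (Tf (fst u)) \<bullet> Tt (Tf (fst v)))"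

definition bform :: "('hf \<Rightarrow> 'q::real_inner) \<Rightarrow> 'hf \<Rightarrow> 'q \<Rightarrow> real" where
  "bform Dv v q = - (q \<bullet> Dv v)"

definition aGam :: "('hf \<Rightarrow> 'tv::real_inner) \<Rightarrow> ('hp \<Rightarrow> 'tp::real_inner) \<Rightarrow> ('tv \<Rightarrow> 'tp) \<Rightarrow> real \<Rightarrow>
    'hf \<times> 'hp \<Rightarrow> 'hf \<times> 'hp \<Rightarrow> real" where
  "aGam Tf Tp Nn g u v = g * (Tp (snd u) \<bullet> Nn (Tf (fst v))) - g * (Nn (Tf (fst u)) \<bullet> Tp (snd v))"

definition ast :: "('hf \<Rightarrow> 'tv::real_inner) \<Rightarrow> ('hp \<Rightarrow> 'tp::real_inner) \<Rightarrow> ('tv \<Rightarrow> 'tp) \<Rightarrow> real \<Rightarrow> real \<Rightarrow>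
    'hf \<times> 'hp \<Rightarrow> 'hf \<times> 'hp \<Rightarrow> real" where
  "ast Tf Tp Nn \<gamma>f \<gamma>p u v = \<gamma>f * (Nn (Tf (fst u)) \<bullet> Nn (Tf (fst v))) + \<gamma>p * (Tp (snd u) \<bullet> Tp (snd v))"


definition gnrm2 :: "('hf \<Rightarrow> 'gf::real_inner) \<Rightarrow> ('hp \<Rightarrow> 'gp::real_inner) \<Rightarrow> 'hf \<times> 'hp \<Rightarrow> real" where
  "gnrm2 Df Dp w = (norm (Df (fst w)))\<^sup>2 + (norm (Dp (snd w)))\<^sup>2"

definition tnrm2 :: "('hf \<Rightarrow> 'tv::real_inner) \<Rightarrow> ('hp \<Rightarrow> 'tp::real_inner) \<Rightarrow> 'hf \<times> 'hp \<Rightarrow> real" where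
  "tnrm2 Tf Tp w = (norm (Tf (fst w)))\<^sup>2 + (norm (Tp (snd w)))\<^sup>2"

end

theory Submission
  imports Defs
begin

text \<open>Let w_n = u_{n+1} - u_n. For n >= 2 the difference of two consecutive steps of the scheme
  is the same scheme for the increments, with forcing f_{n+1} - f_n and without pressure, because
  the increments are divergence free. Testing it with w_n, the G-stability identity of BDF2 gives
  an energy inequality for E_n = |w_n|_S^2 + |2 w_n - w_{n-1}|_S^2 that also contains the numerical
  dissipation |w_n - 2 w_{n-1} + w_{n-2}|_S^2 / (4 dt). The explicitly treated interface term only
  involves this second difference; through the trace inequalities it is absorbed by the
  coercivity of a and by the numerical dissipation, which is where the restriction on dt enters.
  Adding multiples of |grad w_n|^2 and |grad w_{n-1}|^2 to E_n / (4 dt) gives a Lyapunov function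
  which, by the Poincare inequality, contracts by a fixed factor in every step up to the forcing;
  a discrete Gronwall argument then yields the geometric decay.\<close>

lemma Youngs_inequality_eps:
  fixes x y e :: real
  assumes "0 < e"
  shows "x * y \<le> e * x\<^sup>2 + y\<^sup>2 / (4 * e)"
proof -
  have "(x * y) * (4 * e) \<le> 4 * e\<^sup>2 * x\<^sup>2 + y\<^sup>2"
    using zero_le_power2[of "2 * e * x - y"] by (simp add: power2_eq_square algebra_simps)
  also have "\<dots> = (e * x\<^sup>2 + y\<^sup>2 / (4 * e)) * (4 * e)"
    using assms by (simp add: field_simps power2_eq_square)
  finally show ?thesis
    using assms by (simp add: mult_le_cancel_right)
qed

lemma sum_le_sqrt2_mult_sqrt_sum_squares:
  fixes p q :: real
  shows "p + q \<le> sqrt 2 * sqrt (p\<^sup>2 + q\<^sup>2)"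
proof -
  have "(p + q)\<^sup>2 \<le> 2 * (p\<^sup>2 + q\<^sup>2)"
    using zero_le_power2[of "p - q"] by (simp add: power2_eq_square algebra_simps)
  then have "sqrt ((p + q)\<^sup>2) \<le> sqrt 2 * sqrt (p\<^sup>2 + q\<^sup>2)"
    unfolding real_sqrt_mult[symmetric] by (rule real_sqrt_le_mono)
  then show ?thesis
    by (simp only: real_sqrt_abs)
qed

lemma power2_le_of_sqrt_le:
  fixes x y k :: real
  assumes "sqrt x \<le> k * sqrt y" "0 \<le> x" "0 \<le> y"
  shows "x \<le> k\<^sup>2 * y"
proof -
  have "(sqrt x)\<^sup>2 \<le> (k * sqrt y)\<^sup>2"
    by (rule power_mono[OF assms(1)]) (use assms(2) in simp)
  then show ?thesis
    using assms(2,3) by (simp add: power_mult_distrib)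
qed

lemma bdf2_inner_identity:
  fixes a b c :: "'a::real_inner"
  shows "2 * ((3 *\<^sub>R a - 4 *\<^sub>R b + c) \<bullet> a)
    = (norm a)\<^sup>2 + (norm (2 *\<^sub>R a - b))\<^sup>2 - (norm b)\<^sup>2 - (norm (2 *\<^sub>R b - c))\<^sup>2
      + (norm (a - 2 *\<^sub>R b + c))\<^sup>2"
  by (simp add: power2_norm_eq_inner inner_simps algebra_simps inner_commute)

lemma norm_two_scale_diff_le:
  fixes x y :: "'a::real_inner"
  shows "(norm (2 *\<^sub>R x - y))\<^sup>2 \<le> 8 * (norm x)\<^sup>2 + 2 * (norm y)\<^sup>2"
  using zero_le_power2[of "norm (2 *\<^sub>R x + y)"]
  by (simp add: power2_norm_eq_inner inner_simps inner_commute algebra_simps)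

lemma norm_second_difference_le:
  fixes a b c :: "'a::real_normed_vector"
  shows "(norm (a - 2 *\<^sub>R b + c))\<^sup>2 \<le> 4 * ((norm a)\<^sup>2 + 2 * (norm b)\<^sup>2 + (norm c)\<^sup>2)"
proof -
  have "norm (a - 2 *\<^sub>R b + c) \<le> norm (a - 2 *\<^sub>R b) + norm c"
    by (rule norm_triangle_ineq)
  also have "norm (a - 2 *\<^sub>R b) \<le> norm a + norm (2 *\<^sub>R b)"
    by (rule norm_triangle_ineq4)
  finally have "norm (a - 2 *\<^sub>R b + c) \<le> norm a + 2 * norm b + norm c"
    by simp
  then have "(norm (a - 2 *\<^sub>R b + c))\<^sup>2 \<le> (norm a + 2 * norm b + norm c)\<^sup>2"
    by (rule power_mono) simp
  also have "\<dots> \<le> 4 * ((norm a)\<^sup>2 + 2 * (norm b)\<^sup>2 + (norm c)\<^sup>2)"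
    using zero_le_power2[of "norm a - norm b"] zero_le_power2[of "norm b - norm c"]
      zero_le_power2[of "norm a - norm c"]
    by (simp add: power2_eq_square algebra_simps)
  finally show ?thesis .
qed

text \<open>In the application \<open>td\<close>, \<open>tw\<close> are the interface norms of a second difference \<open>\<delta>\<close> and
  of \<open>w\<close>, \<open>nd\<close>, \<open>gd\<close> the \<open>L\<^sup>2\<close> and gradient norms of \<open>\<delta>\<close>, and \<open>Nd\<close> its weighted norm squared.
  Two weighted Young inequalities leave a multiple of \<open>nd\<^sup>2\<close>, which the time step restriction
  makes at most \<open>Nd / (4 dt)\<close>.\<close>
lemma absorb_interface:
  fixes R c td tw nd gd G Nd Ctr CS Ca dt :: real
  assumes R: "R \<le> c * td * tw"
    and td: "td\<^sup>2 \<le> Ctr\<^sup>2 * (nd * gd)" and tw: "tw\<^sup>2 \<le> Ctr\<^sup>2 * G"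
    and nd: "nd\<^sup>2 \<le> CS\<^sup>2 * Nd"
    and dt: "64 * c ^ 4 * Ctr ^ 8 * CS\<^sup>2 * dt \<le> Ca ^ 3" "0 < dt"
    and pos: "0 < Ca" "Ctr \<noteq> 0" "0 \<le> Nd"
  shows "R \<le> Ca / 4 * G + Ca / 64 * gd\<^sup>2 + Nd / (4 * dt)"
proof -
  define k where "k = c\<^sup>2 * Ctr ^ 4 / Ca"
  have "tw * (c * td) \<le> Ca / (4 * Ctr\<^sup>2) * tw\<^sup>2 + (c * td)\<^sup>2 / (4 * (Ca / (4 * Ctr\<^sup>2)))"
    by (rule Youngs_inequality_eps) (use pos in simp)
  also have "(c * td)\<^sup>2 / (4 * (Ca / (4 * Ctr\<^sup>2))) = c\<^sup>2 * Ctr\<^sup>2 / Ca * td\<^sup>2"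
    using pos by (simp add: field_simps power2_eq_square)
  finally have young1: "tw * (c * td) \<le> Ca / (4 * Ctr\<^sup>2) * tw\<^sup>2 + c\<^sup>2 * Ctr\<^sup>2 / Ca * td\<^sup>2" .
  have "Ca / (4 * Ctr\<^sup>2) * tw\<^sup>2 \<le> Ca / (4 * Ctr\<^sup>2) * (Ctr\<^sup>2 * G)"
    using tw pos by (intro mult_left_mono) auto
  then have tw_bound: "Ca / (4 * Ctr\<^sup>2) * tw\<^sup>2 \<le> Ca / 4 * G"
    using pos by simp
  have "c\<^sup>2 * Ctr\<^sup>2 / Ca * td\<^sup>2 \<le> c\<^sup>2 * Ctr\<^sup>2 / Ca * (Ctr\<^sup>2 * (nd * gd))"
    using td pos by (intro mult_left_mono) auto
  then have td_bound: "c\<^sup>2 * Ctr\<^sup>2 / Ca * td\<^sup>2 \<le> gd * (k * nd)"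
    by (simp add: k_def power2_eq_square power4_eq_xxxx algebra_simps)
  have young2: "gd * (k * nd) \<le> Ca / 64 * gd\<^sup>2 + 16 / Ca * (k * nd)\<^sup>2"
    using Youngs_inequality_eps[of "Ca / 64" gd "k * nd"] pos by (simp add: field_simps)
  have "(k * nd)\<^sup>2 \<le> k\<^sup>2 * (CS\<^sup>2 * Nd)"
    using nd by (simp add: power_mult_distrib mult_left_mono)
  then have "16 / Ca * (k * nd)\<^sup>2 \<le> 16 / Ca * (k\<^sup>2 * (CS\<^sup>2 * Nd))"
    by (rule mult_left_mono) (use pos in simp)
  also have "\<dots> = (16 * c ^ 4 * Ctr ^ 8 * CS\<^sup>2 / Ca ^ 3) * Nd"
  proof -
    have "k\<^sup>2 = c ^ 4 * Ctr ^ 8 / Ca\<^sup>2"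
      by (simp add: k_def power_mult_distrib power_divide flip: power_mult)
    then show ?thesis
      using pos by (simp add: field_simps power2_eq_square power3_eq_cube)
  qed
  also have "\<dots> \<le> (1 / (4 * dt)) * Nd"
    using dt pos by (intro mult_right_mono) (simp_all add: field_simps)
  finally have nd_bound: "16 / Ca * (k * nd)\<^sup>2 \<le> Nd / (4 * dt)"
    by simp
  have "R \<le> tw * (c * td)"
    using R by (simp add: mult_ac)
  then show ?thesis
    using young1 tw_bound td_bound young2 nd_bound by linarith
qed

lemma geometric_decay:
  fixes \<Psi> m :: "nat \<Rightarrow> real"
  assumes step: "\<And>n. 2 \<le> n \<Longrightarrow> \<Psi> n \<le> \<rho> * \<Psi> (n - 1) + c * m n"
    and mono: "\<And>n. 1 \<le> n \<Longrightarrow> m n \<le> m (Suc n)"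
    and nonneg: "\<And>n. 1 \<le> n \<Longrightarrow> 0 \<le> m n"
    and \<rho>: "0 \<le> \<rho>" "\<rho> < 1" and c: "0 \<le> c"
  shows "1 \<le> n \<Longrightarrow> \<Psi> n \<le> \<rho> ^ (n - 1) * \<Psi> 1 + c * m n / (1 - \<rho>)"
proof (induction n rule: dec_induct)
  case base
  show ?case
    using c nonneg[of 1] \<rho> by simp
next
  case (step k)
  have "\<Psi> (Suc k) \<le> \<rho> * (\<rho> ^ (k - 1) * \<Psi> 1 + c * m k / (1 - \<rho>)) + c * m (Suc k)"
    using assms(1)[of "Suc k"] step.IH step.hyps \<rho> by (simp add: mult_left_mono order_trans)
  moreover have "\<rho> * (\<rho> ^ (k - 1) * \<Psi> 1 + c * m k / (1 - \<rho>))
      = \<rho> ^ k * \<Psi> 1 + \<rho> * (c * m k / (1 - \<rho>))"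
    using step.hyps by (cases k) (auto simp: algebra_simps)
  moreover have "\<rho> * (c * m k / (1 - \<rho>)) \<le> \<rho> * (c * m (Suc k) / (1 - \<rho>))"
    using mono[OF step.hyps(1)] \<rho> c
    by (intro mult_left_mono divide_right_mono mult_left_mono) auto
  moreover have "\<rho> * (c * m (Suc k) / (1 - \<rho>)) + c * m (Suc k) = c * m (Suc k) / (1 - \<rho>)"
    using \<rho> by (simp add: field_simps)
  ultimately have "\<Psi> (Suc k) \<le> \<rho> ^ k * \<Psi> 1 + c * m (Suc k) / (1 - \<rho>)"
    by linarith
  then show ?case
    by simp
qed

lemma Kmin_mult_norm_le:
  fixes K :: "'a::real_inner \<Rightarrow> 'a"
  assumes "bounded_linear K"
  shows "Kmin K * (norm x)\<^sup>2 \<le> K x \<bullet> x"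
proof (cases "x = 0")
  case True
  then show ?thesis
    using assms by (simp add: linear_simps)
next
  case False
  obtain B where B: "\<And>y. norm (K y) \<le> norm y * B"
    using bounded_linear.bounded[OF assms] by blast
  have bdd: "bdd_below {(K y \<bullet> y) / (norm y)\<^sup>2 | y. y \<noteq> 0}"
  proof (rule bdd_belowI[where m = "- B"])
    fix z
    assume "z \<in> {(K y \<bullet> y) / (norm y)\<^sup>2 | y. y \<noteq> 0}"
    then obtain y where y: "y \<noteq> 0" "z = (K y \<bullet> y) / (norm y)\<^sup>2"
      by blast
    have "\<bar>K y \<bullet> y\<bar> \<le> norm (K y) * norm y"
      by (rule Cauchy_Schwarz_ineq2)
    also have "\<dots> \<le> norm y * B * norm y"
      using B[of y] by (rule mult_right_mono) simp
    finally have "\<bar>K y \<bullet> y\<bar> \<le> norm y * B * norm y" .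
    then have "- B * (norm y)\<^sup>2 \<le> K y \<bullet> y"
      by (simp add: power2_eq_square algebra_simps abs_le_iff)
    then show "- B \<le> z"
      using y by (simp add: pos_le_divide_eq)
  qed
  have "Kmin K \<le> (K x \<bullet> x) / (norm x)\<^sup>2"
    unfolding Kmin_def by (rule cInf_lower) (use False bdd in auto)
  then show ?thesis
    using False by (simp add: pos_le_divide_eq)
qed

lemma ipF_le:
  "ipF Ef Ep g h w \<le> sqrt (max 1 (g\<^sup>2) * fnrm2 h) * sqrt (nrm2 Ef Ep w)"
proof -
  have "ipF Ef Ep g h w = (fst h, g *\<^sub>R snd h) \<bullet> (Ef (fst w), Ep (snd w))"
    by (simp add: ipF_def)
  also have "\<dots> \<le> norm (fst h, g *\<^sub>R snd h) * norm (Ef (fst w), Ep (snd w))"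
    by (rule norm_cauchy_schwarz)
  also have "norm (fst h, g *\<^sub>R snd h) \<le> sqrt (max 1 (g\<^sup>2) * fnrm2 h)"
  proof -
    have "(norm (fst h))\<^sup>2 + g\<^sup>2 * (norm (snd h))\<^sup>2
        \<le> max 1 (g\<^sup>2) * (norm (fst h))\<^sup>2 + max 1 (g\<^sup>2) * (norm (snd h))\<^sup>2"
      using mult_right_mono[of 1 "max 1 (g\<^sup>2)" "(norm (fst h))\<^sup>2"]
        mult_right_mono[of "g\<^sup>2" "max 1 (g\<^sup>2)" "(norm (snd h))\<^sup>2"] by simp
    then show ?thesis
      by (simp add: norm_Pair fnrm2_def power_mult_distrib algebra_simps)
  qed
  finally show ?thesis
    by (simp add: mult_right_mono nrm2_def norm_Pair)
qed

lemma ipF_diff_left: "ipF Ef Ep g (h - h') w = ipF Ef Ep g h w - ipF Ef Ep g h' w"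
  by (simp add: ipF_def inner_diff_left algebra_simps)

lemma fnrm2_scale: "fnrm2 (c *\<^sub>R h) = c\<^sup>2 * fnrm2 h"
  by (simp add: fnrm2_def power_mult_distrib algebra_simps)

lemma nrm2_scale: "linear Ef \<Longrightarrow> linear Ep \<Longrightarrow> nrm2 Ef Ep (c *\<^sub>R w) = c\<^sup>2 * nrm2 Ef Ep w"
  by (simp add: nrm2_def linear_scale power_mult_distrib algebra_simps)

lemma Poincare_constant_ge_1:
  assumes "\<exists>C. \<forall>w. nrm2 Ef Ep w \<le> C * gnrm2 Df Dp w"
  obtains CP where "1 \<le> CP" "\<And>w. nrm2 Ef Ep w \<le> CP * gnrm2 Df Dp w"
proof -
  obtain C where C: "\<And>w. nrm2 Ef Ep w \<le> C * gnrm2 Df Dp w"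
    using assms by blast
  have "nrm2 Ef Ep w \<le> max 1 C * gnrm2 Df Dp w" for w
  proof -
    have "C * gnrm2 Df Dp w \<le> max 1 C * gnrm2 Df Dp w"
      by (rule mult_right_mono) (simp_all add: gnrm2_def)
    then show ?thesis
      using C[of w] by linarith
  qed
  then show thesis
    by (rule that[rotated]) simp
qed

locale stokes_darcy =
  fixes Ef :: "'hf::real_vector \<Rightarrow> 'lf::real_inner"
    and Ep :: "'hp::real_vector \<Rightarrow> 'lp::real_inner"
    and Df :: "'hf \<Rightarrow> 'gf::real_inner"
    and Dp :: "'hp \<Rightarrow> 'gp::real_inner"
    and K :: "'gp \<Rightarrow> 'gp"
    and Tf :: "'hf \<Rightarrow> 'tv::real_inner"
    and Tp :: "'hp \<Rightarrow> 'tp::real_inner"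
    and Nn :: "'tv \<Rightarrow> 'tp"
    and Tt :: "'tv \<Rightarrow> 'tt::real_inner"
    and \<nu> g S \<alpha> \<gamma>f \<gamma>p CS Ctr CP dt :: real
  assumes linear: "linear Ef" "linear Ep" "linear Df" "linear Dp" "linear Tf" "linear Tp"
      "linear Nn" "linear Tt"
    and K_bounded_linear: "bounded_linear K"
    and Kmin_pos: "Kmin K > 0"
    and normal_tangential_split: "\<And>w. (norm (Nn w))\<^sup>2 + (norm (Tt w))\<^sup>2 = (norm w)\<^sup>2"
    and params: "\<nu> > 0" "g > 0" "S > 0" "\<alpha> > 0" "\<gamma>f \<ge> 0" "\<gamma>p \<ge> 0"
    and CS: "\<And>w. sqrt (nrm2 Ef Ep w) \<le> CS * sqrt (ipS Ef Ep g S w w)"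
    and Ctr1: "\<And>w. sqrt (tnrm2 Tf Tp w) \<le> Ctr * sqrt (sqrt (nrm2 Ef Ep w) * sqrt (gnrm2 Df Dp w))"
    and Ctr2: "\<And>w. sqrt (tnrm2 Tf Tp w) \<le> Ctr * sqrt (gnrm2 Df Dp w)"
    and poincare: "\<And>w. nrm2 Ef Ep w \<le> CP * gnrm2 Df Dp w"
    and CP_ge_1: "1 \<le> CP"
    and dt_pos: "0 < dt"
    and dt_small: "dt \<le> (min \<nu> (g * Kmin K)) ^ 3
      / (536 * CS\<^sup>2 * (sqrt 2 * Max {\<gamma>f, \<gamma>p, g}) ^ 4 * Ctr ^ 8)"
begin

abbreviation Snorm2 :: "'hf \<times> 'hp \<Rightarrow> real" where
  "Snorm2 w \<equiv> ipS Ef Ep g S w w"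

definition Ca :: real where
  "Ca = min \<nu> (g * Kmin K)"

definition Cct :: real where
  "Cct = sqrt 2 * Max {\<gamma>f, \<gamma>p, g}"

lemma Ca_pos: "0 < Ca"
  using params Kmin_pos by (simp add: Ca_def)

text \<open>A vanishing denominator would turn the restriction into \<open>dt \<le> 0\<close>, as \<open>x / 0 = 0\<close>.
  The argument below only needs the constant 256 in place of 536.\<close>
lemma time_step_restriction:
  shows "Ctr \<noteq> 0" and "256 * Cct ^ 4 * Ctr ^ 8 * CS\<^sup>2 * dt \<le> Ca ^ 3"
proof -
  define den where "den = 536 * CS\<^sup>2 * Cct ^ 4 * Ctr ^ 8"
  have dt_le: "dt \<le> Ca ^ 3 / den"
    using dt_small by (simp add: den_def Ca_def Cct_def)
  have "0 \<le> den"
    by (simp add: den_def zero_le_mult_iff zero_le_even_power)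
  moreover have "den \<noteq> 0"
    using dt_le dt_pos by auto
  ultimately have den_pos: "0 < den"
    by simp
  then show "Ctr \<noteq> 0"
    by (auto simp: den_def)
  have "256 * Cct ^ 4 * Ctr ^ 8 * CS\<^sup>2 * dt \<le> dt * den"
    using dt_pos by (simp add: den_def zero_le_mult_iff zero_le_even_power)
  also have "dt * den \<le> Ca ^ 3"
    using dt_le den_pos by (simp add: pos_le_divide_eq)
  finally show "256 * Cct ^ 4 * Ctr ^ 8 * CS\<^sup>2 * dt \<le> Ca ^ 3" .
qed

definition S_embedding :: "'hf \<times> 'hp \<Rightarrow> 'lf \<times> 'lp" where
  "S_embedding w = (Ef (fst w), sqrt (g * S) *\<^sub>R Ep (snd w))"

lemma linear_S_embedding: "linear S_embedding"
  unfolding S_embedding_def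
  by (rule linearI) (simp_all add: linear_add[OF linear(1)] linear_add[OF linear(2)]
      linear_scale[OF linear(1)] linear_scale[OF linear(2)] algebra_simps)

lemma ipS_eq_inner_S_embedding: "ipS Ef Ep g S v w = S_embedding v \<bullet> S_embedding w"
  using params by (simp add: ipS_def S_embedding_def)

lemma Snorm2_eq: "Snorm2 w = (norm (S_embedding w))\<^sup>2"
  by (simp add: ipS_eq_inner_S_embedding power2_norm_eq_inner)

lemma Snorm2_nonneg: "0 \<le> Snorm2 w"
  by (simp add: Snorm2_eq)

lemma ipS_bdf2_identity:
  "2 * ipS Ef Ep g S (3 *\<^sub>R a - 4 *\<^sub>R b + c) a
    = Snorm2 a + Snorm2 (2 *\<^sub>R a - b) - Snorm2 b - Snorm2 (2 *\<^sub>R b - c) + Snorm2 (a - 2 *\<^sub>R b + c)"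
  using bdf2_inner_identity[of "S_embedding a" "S_embedding b" "S_embedding c"]
  by (simp add: Snorm2_eq ipS_eq_inner_S_embedding linear_add[OF linear_S_embedding]
      linear_diff[OF linear_S_embedding] linear_scale[OF linear_S_embedding])

lemma Snorm2_two_scale_diff_le: "Snorm2 (2 *\<^sub>R v - w) \<le> 8 * Snorm2 v + 2 * Snorm2 w"
  using norm_two_scale_diff_le[of "S_embedding v" "S_embedding w"]
  by (simp add: Snorm2_eq linear_diff[OF linear_S_embedding] linear_scale[OF linear_S_embedding])

lemma Snorm2_le_nrm2: "Snorm2 w \<le> max 1 (g * S) * nrm2 Ef Ep w"
proof -
  have "Snorm2 w = (norm (Ef (fst w)))\<^sup>2 + g * S * (norm (Ep (snd w)))\<^sup>2"
    by (simp add: ipS_def power2_norm_eq_inner)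
  also have "\<dots> \<le> max 1 (g * S) * (norm (Ef (fst w)))\<^sup>2 + max 1 (g * S) * (norm (Ep (snd w)))\<^sup>2"
    using mult_right_mono[of 1 "max 1 (g * S)" "(norm (Ef (fst w)))\<^sup>2"]
      mult_right_mono[of "g * S" "max 1 (g * S)" "(norm (Ep (snd w)))\<^sup>2"] by simp
  finally show ?thesis
    by (simp add: nrm2_def algebra_simps)
qed

lemma nrm2_le_Snorm2: "nrm2 Ef Ep w \<le> CS\<^sup>2 * Snorm2 w"
  using power2_le_of_sqrt_le[OF CS] Snorm2_nonneg by (simp add: nrm2_def)

lemma Snorm2_le_gnrm2: "Snorm2 w \<le> max 1 (g * S) * CP * gnrm2 Df Dp w"
proof -
  have "max 1 (g * S) * nrm2 Ef Ep w \<le> max 1 (g * S) * (CP * gnrm2 Df Dp w)"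
    by (rule mult_left_mono[OF poincare]) simp
  then show ?thesis
    unfolding mult.assoc using Snorm2_le_nrm2[of w] by linarith
qed

lemma gnrm2_second_difference_le:
  "gnrm2 Df Dp (a - 2 *\<^sub>R b + c) \<le> 4 * (gnrm2 Df Dp a + 2 * gnrm2 Df Dp b + gnrm2 Df Dp c)"
  using norm_second_difference_le[of "Df (fst a)" "Df (fst b)" "Df (fst c)"]
    norm_second_difference_le[of "Dp (snd a)" "Dp (snd b)" "Dp (snd c)"]
  by (simp add: gnrm2_def linear_add[OF linear(3)] linear_diff[OF linear(3)] linear_scale[OF linear(3)]
      linear_add[OF linear(4)] linear_diff[OF linear(4)] linear_scale[OF linear(4)] algebra_simps)

lemma aform_coercive: "Ca * gnrm2 Df Dp w \<le> aform Df Dp K Tf Tt \<nu> g \<alpha> w w"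
proof -
  have "Ca * gnrm2 Df Dp w \<le> \<nu> * (norm (Df (fst w)))\<^sup>2 + (g * Kmin K) * (norm (Dp (snd w)))\<^sup>2"
    unfolding gnrm2_def distrib_left Ca_def by (intro add_mono mult_right_mono) auto
  also have "\<dots> \<le> \<nu> * (norm (Df (fst w)))\<^sup>2 + g * (K (Dp (snd w)) \<bullet> Dp (snd w))"
    using mult_left_mono[OF Kmin_mult_norm_le[OF K_bounded_linear], of g] params
    by (simp add: algebra_simps)
  also have "\<dots> \<le> aform Df Dp K Tf Tt \<nu> g \<alpha> w w"
    using params by (simp add: aform_def power2_norm_eq_inner)
  finally show ?thesis .
qed

lemma forcing_le: "ipF Ef Ep g h w \<le> Ca / 4 * gnrm2 Df Dp w + max 1 (g\<^sup>2) * CP / Ca * fnrm2 h"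
proof -
  define e where "e = Ca / (4 * CP)"
  have e_pos: "0 < e"
    using Ca_pos CP_ge_1 by (simp add: e_def)
  have "ipF Ef Ep g h w \<le> sqrt (nrm2 Ef Ep w) * sqrt (max 1 (g\<^sup>2) * fnrm2 h)"
    using ipF_le[of Ef Ep g h w] by (simp add: mult.commute)
  also have "\<dots> \<le> e * (sqrt (nrm2 Ef Ep w))\<^sup>2 + (sqrt (max 1 (g\<^sup>2) * fnrm2 h))\<^sup>2 / (4 * e)"
    by (rule Youngs_inequality_eps[OF e_pos])
  also have "(sqrt (nrm2 Ef Ep w))\<^sup>2 = nrm2 Ef Ep w"
    by (simp add: nrm2_def)
  also have "(sqrt (max 1 (g\<^sup>2) * fnrm2 h))\<^sup>2 = max 1 (g\<^sup>2) * fnrm2 h"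
    by (simp add: fnrm2_def)
  also have "e * nrm2 Ef Ep w \<le> e * (CP * gnrm2 Df Dp w)"
    using poincare e_pos by (simp add: mult_left_mono)
  finally show ?thesis
    using CP_ge_1 Ca_pos by (simp add: e_def field_simps)
qed

lemma norm_Nn_le: "norm (Nn x) \<le> norm x"
proof (rule power2_le_imp_le)
  show "(norm (Nn x))\<^sup>2 \<le> (norm x)\<^sup>2"
    using normal_tangential_split[of x] zero_le_power2[of "norm (Tt x)"] by linarith
qed simp

lemma interface_le:
  "aGam Tf Tp Nn g d w - ast Tf Tp Nn \<gamma>f \<gamma>p d w
    \<le> sqrt 2 * Cct * sqrt (tnrm2 Tf Tp d) * sqrt (tnrm2 Tf Tp w)"
proof -
  define M where "M = Max {\<gamma>f, \<gamma>p, g}"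
  have M: "\<gamma>f \<le> M" "\<gamma>p \<le> M" "g \<le> M"
    by (simp_all add: M_def)
  have coeff_le: "\<bar>c * (x \<bullet> y)\<bar> \<le> M * (norm x * norm y)"
    if "0 \<le> c" "c \<le> M" for c and x y :: 'tp
    using that Cauchy_Schwarz_ineq2[of x y] by (simp add: abs_mult mult_mono)
  define a1 a2 b1 b2
    where "a1 = Nn (Tf (fst d))" "a2 = Tp (snd d)" "b1 = Nn (Tf (fst w))" "b2 = Tp (snd w)"
  have "aGam Tf Tp Nn g d w - ast Tf Tp Nn \<gamma>f \<gamma>p d w
      = g * (a2 \<bullet> b1) - g * (a1 \<bullet> b2) - \<gamma>f * (a1 \<bullet> b1) - \<gamma>p * (a2 \<bullet> b2)"
    by (simp add: aGam_def ast_def a1_a2_b1_b2_def)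
  also have "\<dots> \<le> M * (norm a1 + norm a2) * (norm b1 + norm b2)"
    using coeff_le[of g a2 b1] coeff_le[of g a1 b2] coeff_le[of \<gamma>f a1 b1] coeff_le[of \<gamma>p a2 b2]
      M params
    by (simp add: abs_le_iff algebra_simps)
  also have "\<dots> \<le> M * (sqrt 2 * sqrt (tnrm2 Tf Tp d)) * (sqrt 2 * sqrt (tnrm2 Tf Tp w))"
  proof -
    have "norm (Nn (Tf (fst v))) + norm (Tp (snd v)) \<le> sqrt 2 * sqrt (tnrm2 Tf Tp v)" for v
      using norm_Nn_le[of "Tf (fst v)"]
        sum_le_sqrt2_mult_sqrt_sum_squares[of "norm (Tf (fst v))" "norm (Tp (snd v))"]
      by (simp add: tnrm2_def)
    then have "norm a1 + norm a2 \<le> sqrt 2 * sqrt (tnrm2 Tf Tp d)"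
      and "norm b1 + norm b2 \<le> sqrt 2 * sqrt (tnrm2 Tf Tp w)"
      by (simp_all add: a1_a2_b1_b2_def)
    moreover have "0 \<le> M"
      using M(3) params by linarith
    ultimately show ?thesis
      by (intro mult_mono mult_left_mono) (auto simp: tnrm2_def)
  qed
  also have "\<dots> = sqrt 2 * Cct * sqrt (tnrm2 Tf Tp d) * sqrt (tnrm2 Tf Tp w)"
    by (simp add: Cct_def M_def)
  finally show ?thesis .
qed

lemma interface_absorbed:
  "aGam Tf Tp Nn g d w - ast Tf Tp Nn \<gamma>f \<gamma>p d w
    \<le> Ca / 4 * gnrm2 Df Dp w + Ca / 64 * gnrm2 Df Dp d + Snorm2 d / (4 * dt)"
proof -
  have "(sqrt 2 * Cct) ^ 4 = 4 * Cct ^ 4"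
    by (simp add: power_mult_distrib power4_eq_xxxx)
  then have dt: "64 * (sqrt 2 * Cct) ^ 4 * Ctr ^ 8 * CS\<^sup>2 * dt \<le> Ca ^ 3"
    using time_step_restriction(2) by simp
  have td: "(sqrt (tnrm2 Tf Tp d))\<^sup>2 \<le> Ctr\<^sup>2 * (sqrt (nrm2 Ef Ep d) * sqrt (gnrm2 Df Dp d))"
    using power2_le_of_sqrt_le[OF Ctr1[of d]] by (simp add: tnrm2_def nrm2_def gnrm2_def)
  have tw: "(sqrt (tnrm2 Tf Tp w))\<^sup>2 \<le> Ctr\<^sup>2 * gnrm2 Df Dp w"
    using power2_le_of_sqrt_le[OF Ctr2[of w]] by (simp add: tnrm2_def gnrm2_def)
  have nd: "(sqrt (nrm2 Ef Ep d))\<^sup>2 \<le> CS\<^sup>2 * Snorm2 d"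
    using nrm2_le_Snorm2 by (simp add: nrm2_def)
  have "(sqrt (gnrm2 Df Dp d))\<^sup>2 = gnrm2 Df Dp d"
    by (simp add: gnrm2_def)
  then show ?thesis
    using absorb_interface[OF interface_le td tw nd dt dt_pos Ca_pos time_step_restriction(1) Snorm2_nonneg]
    by simp
qed

definition Cf :: real where
  "Cf = max 1 (g\<^sup>2) * CP * dt\<^sup>2 / Ca"

definition Clyap :: real where
  "Clyap = 9 * max 1 (g * S) * CP / (4 * dt) + 5 / 16 * Ca"

definition decay_rate :: real where
  "decay_rate = 1 / (1 + Ca / (8 * Clyap))"

lemma Cf_nonneg: "0 \<le> Cf"
  using Ca_pos CP_ge_1 by (simp add: Cf_def)

lemma Clyap_pos: "0 < Clyap"
  using Ca_pos CP_ge_1 dt_pos by (simp add: Clyap_def add_nonneg_pos)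

lemma decay_rate_pos: "0 < decay_rate" and decay_rate_less_1: "decay_rate < 1"
proof -
  have "0 < Ca / (8 * Clyap)"
    using Ca_pos Clyap_pos by simp
  then show "0 < decay_rate" "decay_rate < 1"
    by (simp_all add: decay_rate_def)
qed

lemma forms_linear_left:
  "linear (\<lambda>x. ipS Ef Ep g S x v)" "linear (\<lambda>x. aform Df Dp K Tf Tt \<nu> g \<alpha> x v)"
  "linear (\<lambda>x. aGam Tf Tp Nn g x v)" "linear (\<lambda>x. ast Tf Tp Nn \<gamma>f \<gamma>p x v)"
  using linear bounded_linear.linear[OF K_bounded_linear]
  by (auto intro!: linearI simp: ipS_def aform_def aGam_def ast_def linear_add linear_scale
      inner_add_left algebra_simps)

lemmas forms_diff_left = forms_linear_left[THEN linear_diff]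
lemmas forms_add_left = forms_linear_left[THEN linear_add]
lemmas forms_scale_left = forms_linear_left[THEN linear_scale]

text \<open>The scheme tested with a divergence-free \<open>v\<close>, for the new value \<open>x\<close> and history \<open>y\<close>, \<open>z\<close>,
  with the explicit interface term moved to the left.\<close>
definition bdf2_form :: "'hf \<times> 'hp \<Rightarrow> 'hf \<times> 'hp \<Rightarrow> 'hf \<times> 'hp \<Rightarrow> 'hf \<times> 'hp \<Rightarrow> real" where
  "bdf2_form v x y z =
     ipS Ef Ep g S ((1 / (2 * dt)) *\<^sub>R (3 *\<^sub>R x - 4 *\<^sub>R y + z)) v + aform Df Dp K Tf Tt \<nu> g \<alpha> x v
     + ast Tf Tp Nn \<gamma>f \<gamma>p x v
     + (aGam Tf Tp Nn g (2 *\<^sub>R y - z) v - ast Tf Tp Nn \<gamma>f \<gamma>p (2 *\<^sub>R y - z) v)"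

lemma bdf2_form_diff:
  "bdf2_form v (x - x') (y - y') (z - z') = bdf2_form v x y z - bdf2_form v x' y' z'"
  by (simp add: bdf2_form_def forms_diff_left forms_add_left forms_scale_left algebra_simps)

lemma bdf2_form_self:
  "bdf2_form a a b c
    = ipS Ef Ep g S (3 *\<^sub>R a - 4 *\<^sub>R b + c) a / (2 * dt) + aform Df Dp K Tf Tt \<nu> g \<alpha> a a
      - (aGam Tf Tp Nn g (a - 2 *\<^sub>R b + c) a - ast Tf Tp Nn \<gamma>f \<gamma>p (a - 2 *\<^sub>R b + c) a)"
proof -
  have "aGam Tf Tp Nn g a a = 0"
    by (simp add: aGam_def inner_commute)
  then show ?thesis
    using dt_pos
    by (simp add: bdf2_form_def forms_diff_left forms_add_left forms_scale_left algebra_simps)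
      (simp add: field_simps)
qed

end

locale bdf2_solution =
  stokes_darcy Ef Ep Df Dp K Tf Tp Nn Tt \<nu> g S \<alpha> \<gamma>f \<gamma>p CS Ctr CP dt
  for Ef :: "'hf::real_vector \<Rightarrow> 'lf::real_inner" and Ep :: "'hp::real_vector \<Rightarrow> 'lp::real_inner"
    and Df Dp K Tf Tp Nn Tt \<nu> g S \<alpha> \<gamma>f \<gamma>p CS Ctr CP dt +
  fixes Dv :: "'hf \<Rightarrow> 'q::real_inner"
    and u :: "nat \<Rightarrow> 'hf \<times> 'hp"
    and p :: "nat \<Rightarrow> 'q"
    and f :: "nat \<Rightarrow> 'lf \<times> 'lp"
  assumes linear_Dv: "linear Dv"
    and scheme: "\<forall>n\<ge>1. (\<forall>v.
           ipS Ef Ep g S ((1 / (2 * dt)) *\<^sub>R (3 *\<^sub>R u (n+1) - 4 *\<^sub>R u n + u (n-1))) v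
           + aform Df Dp K Tf Tt \<nu> g \<alpha> (u (n+1)) v
           + bform Dv (fst v) (p (n+1))
           + ast Tf Tp Nn \<gamma>f \<gamma>p (u (n+1)) v
           = ipF Ef Ep g (f (n+1)) v
             - (aGam Tf Tp Nn g (2 *\<^sub>R u n - u (n-1)) v
                - ast Tf Tp Nn \<gamma>f \<gamma>p (2 *\<^sub>R u n - u (n-1)) v))
         \<and> (\<forall>q. bform Dv (fst (u (n+1))) q = 0)"
begin

lemma divergence_free:
  assumes "2 \<le> n"
  shows "Dv (fst (u n)) = 0"
proof -
  have "1 \<le> n - 1"
    using assms by simp
  then have "\<forall>q. bform Dv (fst (u (n - 1 + 1))) q = 0"
    using scheme by blast
  then have "bform Dv (fst (u n)) (Dv (fst (u n))) = 0"
    using assms by simp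
  then show ?thesis
    by (simp add: bform_def)
qed

lemma scheme_tested:
  assumes "1 \<le> n" "Dv (fst v) = 0"
  shows "bdf2_form v (u (n + 1)) (u n) (u (n - 1)) = ipF Ef Ep g (f (n + 1)) v"
proof -
  have "bform Dv (fst v) (p (n + 1)) = 0"
    by (simp add: bform_def assms(2))
  moreover have "ipS Ef Ep g S ((1 / (2 * dt)) *\<^sub>R (3 *\<^sub>R u (n+1) - 4 *\<^sub>R u n + u (n-1))) v
           + aform Df Dp K Tf Tt \<nu> g \<alpha> (u (n+1)) v
           + bform Dv (fst v) (p (n+1))
           + ast Tf Tp Nn \<gamma>f \<gamma>p (u (n+1)) v
           = ipF Ef Ep g (f (n+1)) v
             - (aGam Tf Tp Nn g (2 *\<^sub>R u n - u (n-1)) v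
                - ast Tf Tp Nn \<gamma>f \<gamma>p (2 *\<^sub>R u n - u (n-1)) v)"
    using scheme assms(1) by blast
  ultimately show ?thesis
    unfolding bdf2_form_def by linarith
qed

definition incr :: "nat \<Rightarrow> 'hf \<times> 'hp" where
  "incr k = u (Suc k) - u k"

lemma increment_equation:
  assumes "2 \<le> n"
  shows "bdf2_form (incr n) (incr n) (incr (n - 1)) (incr (n - 2))
    = ipF Ef Ep g (f (n + 1) - f n) (incr n)"
proof -
  obtain k where n: "n = Suc (Suc k)"
    using assms by (metis add_2_eq_Suc le_Suc_ex)
  have div: "Dv (fst (incr n)) = 0"
    using divergence_free[of n] divergence_free[of "Suc n"] assms
    by (simp add: incr_def linear_diff[OF linear_Dv])
  have new: "bdf2_form (incr n) (u (n + 1)) (u n) (u (n - 1)) = ipF Ef Ep g (f (n + 1)) (incr n)"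
    by (rule scheme_tested) (use n div in simp_all)
  have old: "bdf2_form (incr n) (u n) (u (n - 1)) (u (n - 2)) = ipF Ef Ep g (f n) (incr n)"
    using scheme_tested[of "n - 1" "incr n"] div by (simp add: n)
  have increments: "incr n = u (n + 1) - u n" "incr (n - 1) = u n - u (n - 1)"
    "incr (n - 2) = u (n - 1) - u (n - 2)"
    by (simp_all add: incr_def n)
  have "bdf2_form (incr n) (incr n) (incr (n - 1)) (incr (n - 2))
      = bdf2_form (incr n) (u (n + 1)) (u n) (u (n - 1)) - bdf2_form (incr n) (u n) (u (n - 1)) (u (n - 2))"
    using bdf2_form_diff[of "incr n" "u (n + 1)" "u n" "u n" "u (n - 1)" "u (n - 1)" "u (n - 2)"]
    by (simp only: increments)
  also have "\<dots> = ipF Ef Ep g (f (n + 1) - f n) (incr n)"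
    by (simp only: new old ipF_diff_left)
  finally show ?thesis .
qed

definition energy :: "nat \<Rightarrow> real" where
  "energy k = Snorm2 (incr k) + Snorm2 (2 *\<^sub>R incr k - incr (k - 1))"

definition grad2 :: "nat \<Rightarrow> real" where
  "grad2 k = gnrm2 Df Dp (incr k)"

definition forcing_rate :: "nat \<Rightarrow> real" where
  "forcing_rate k = fnrm2 ((1 / dt) *\<^sub>R (f (Suc k) - f k))"

lemma grad2_nonneg: "0 \<le> grad2 k"
  by (simp add: grad2_def gnrm2_def)

lemma forcing_rate_nonneg: "0 \<le> forcing_rate k"
  by (simp add: forcing_rate_def fnrm2_def)

lemma energy_inequality:
  assumes "2 \<le> n"
  shows "(energy n - energy (n - 1)) / (4 * dt)
    \<le> - 7 / 16 * Ca * grad2 n + 1 / 8 * Ca * grad2 (n - 1) + 1 / 16 * Ca * grad2 (n - 2)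
      + Cf * forcing_rate n"
proof -
  define a b c where "a = incr n" and "b = incr (n - 1)" and "c = incr (n - 2)"
  define \<delta> where "\<delta> = a - 2 *\<^sub>R b + c"
  define Q where "Q = ipS Ef Ep g S (3 *\<^sub>R a - 4 *\<^sub>R b + c) a"
  have tested: "Q / (2 * dt) + aform Df Dp K Tf Tt \<nu> g \<alpha> a a
      = ipF Ef Ep g (f (n + 1) - f n) a + (aGam Tf Tp Nn g \<delta> a - ast Tf Tp Nn \<gamma>f \<gamma>p \<delta> a)"
    using increment_equation[OF assms] bdf2_form_self[of a b c]
    unfolding a_def b_def c_def \<delta>_def Q_def by linarith
  have "2 * Q = energy n - energy (n - 1) + Snorm2 \<delta>"
    using ipS_bdf2_identity[of a b c]
    by (simp add: energy_def Q_def \<delta>_def a_def b_def c_def numeral_2_eq_2)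
  then have energy_step: "(energy n - energy (n - 1)) / (4 * dt) = Q / (2 * dt) - Snorm2 \<delta> / (4 * dt)"
    using dt_pos by (simp add: field_simps)
  have coercive: "Ca * grad2 n \<le> aform Df Dp K Tf Tt \<nu> g \<alpha> a a"
    using aform_coercive by (simp add: grad2_def a_def)
  have "fnrm2 (f (n + 1) - f n) = dt\<^sup>2 * forcing_rate n"
    unfolding forcing_rate_def fnrm2_scale using dt_pos by (simp add: power_divide)
  then have forcing: "ipF Ef Ep g (f (n + 1) - f n) a \<le> Ca / 4 * grad2 n + Cf * forcing_rate n"
    using forcing_le[of "f (n + 1) - f n" a] by (simp add: grad2_def a_def Cf_def)
  have interface: "aGam Tf Tp Nn g \<delta> a - ast Tf Tp Nn \<gamma>f \<gamma>p \<delta> a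
      \<le> Ca / 4 * grad2 n + Ca / 64 * gnrm2 Df Dp \<delta> + Snorm2 \<delta> / (4 * dt)"
    using interface_absorbed by (simp add: grad2_def a_def)
  have "Ca / 64 * gnrm2 Df Dp \<delta> \<le> Ca / 64 * (4 * (grad2 n + 2 * grad2 (n - 1) + grad2 (n - 2)))"
    using gnrm2_second_difference_le[of a b c] Ca_pos
    by (intro mult_left_mono) (simp_all add: \<delta>_def grad2_def a_def b_def c_def)
  then show ?thesis
    using energy_step tested coercive forcing interface by (simp add: algebra_simps)
qed


definition lyapunov :: "nat \<Rightarrow> real" where
  "lyapunov k = energy k / (4 * dt) + 5 / 16 * Ca * grad2 k + 1 / 16 * Ca * grad2 (k - 1)"

lemma lyapunov_decrease:
  assumes "2 \<le> n"
  shows "lyapunov n + Ca / 8 * (grad2 n + grad2 (n - 1)) \<le> lyapunov (n - 1) + Cf * forcing_rate n"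
proof -
  have "n - 1 - 1 = n - 2"
    by simp
  then show ?thesis
    using energy_inequality[OF assms] by (simp add: lyapunov_def algebra_simps diff_divide_distrib)
qed

lemma energy_le_grad2: "energy n \<le> max 1 (g * S) * CP * (9 * grad2 n + 2 * grad2 (n - 1))"
  using Snorm2_two_scale_diff_le[of "incr n" "incr (n - 1)"]
    Snorm2_le_gnrm2[of "incr n"] Snorm2_le_gnrm2[of "incr (n - 1)"]
  by (simp add: energy_def grad2_def algebra_simps)

lemma lyapunov_le_grad2: "lyapunov n \<le> Clyap * (grad2 n + grad2 (n - 1))"
proof -
  define A where "A = max 1 (g * S) * CP / (4 * dt)"
  have "0 \<le> A"
    using CP_ge_1 dt_pos by (simp add: A_def)
  then have nonneg: "0 \<le> A * grad2 (n - 1)" "0 \<le> Ca * grad2 (n - 1)"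
    using grad2_nonneg[of "n - 1"] Ca_pos by simp_all
  have "energy n / (4 * dt) \<le> max 1 (g * S) * CP * (9 * grad2 n + 2 * grad2 (n - 1)) / (4 * dt)"
    using energy_le_grad2 dt_pos by (simp add: divide_right_mono)
  also have "\<dots> = 9 * (A * grad2 n) + 2 * (A * grad2 (n - 1))"
    using dt_pos by (simp add: A_def field_simps)
  finally have "energy n / (4 * dt) \<le> 9 * (A * grad2 n) + 2 * (A * grad2 (n - 1))" .
  moreover have "Clyap * (grad2 n + grad2 (n - 1))
      = 9 * (A * grad2 n) + 9 * (A * grad2 (n - 1)) + 5 / 16 * (Ca * grad2 n) + 5 / 16 * (Ca * grad2 (n - 1))"
    by (simp add: Clyap_def A_def algebra_simps add_divide_distrib)
  moreover have "lyapunov n = energy n / (4 * dt) + 5 / 16 * (Ca * grad2 n) + 1 / 16 * (Ca * grad2 (n - 1))"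
    by (simp add: lyapunov_def)
  ultimately show ?thesis
    using nonneg by linarith
qed

lemma lyapunov_contraction:
  assumes "2 \<le> n"
  shows "lyapunov n \<le> decay_rate * lyapunov (n - 1) + Cf * forcing_rate n"
proof -
  define \<kappa> where "\<kappa> = Ca / (8 * Clyap)"
  have \<kappa>_pos: "0 < \<kappa>"
    using Ca_pos Clyap_pos by (simp add: \<kappa>_def)
  have "\<kappa> * lyapunov n \<le> Ca / 8 * (grad2 n + grad2 (n - 1))"
    using mult_left_mono[OF lyapunov_le_grad2 less_imp_le[OF \<kappa>_pos]] Clyap_pos
    by (simp add: \<kappa>_def)
  then have "(1 + \<kappa>) * lyapunov n \<le> lyapunov (n - 1) + Cf * forcing_rate n"
    using lyapunov_decrease[OF assms] by (simp add: algebra_simps)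
  then have "lyapunov n \<le> decay_rate * (lyapunov (n - 1) + Cf * forcing_rate n)"
    using \<kappa>_pos by (simp add: decay_rate_def \<kappa>_def[symmetric] field_simps)
  also have "\<dots> \<le> decay_rate * lyapunov (n - 1) + Cf * forcing_rate n"
    using decay_rate_less_1 mult_right_mono[of decay_rate 1 "Cf * forcing_rate n"] Cf_nonneg
      forcing_rate_nonneg[of n]
    by (simp add: distrib_left)
  finally show ?thesis .
qed

lemma increment_le_lyapunov: "nrm2 Ef Ep ((1 / dt) *\<^sub>R (u (n + 1) - u n)) \<le> 4 * CS\<^sup>2 / dt * lyapunov n"
proof -
  have "nrm2 Ef Ep (incr n) \<le> CS\<^sup>2 * Snorm2 (incr n)"
    by (rule nrm2_le_Snorm2)
  also have "Snorm2 (incr n) \<le> energy n"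
    by (simp add: energy_def Snorm2_nonneg)
  also have "energy n \<le> 4 * dt * lyapunov n"
    using grad2_nonneg[of n] grad2_nonneg[of "n - 1"] Ca_pos dt_pos
    by (simp add: lyapunov_def field_simps)
  finally have "nrm2 Ef Ep (incr n) \<le> CS\<^sup>2 * (4 * dt * lyapunov n)"
    by (simp add: mult_left_mono)
  then have "(1 / dt)\<^sup>2 * nrm2 Ef Ep (incr n) \<le> (1 / dt)\<^sup>2 * (CS\<^sup>2 * (4 * dt * lyapunov n))"
    by (rule mult_left_mono) simp
  moreover have "nrm2 Ef Ep ((1 / dt) *\<^sub>R (u (n + 1) - u n)) = (1 / dt)\<^sup>2 * nrm2 Ef Ep (incr n)"
    by (simp only: incr_def nrm2_scale[OF linear(1,2)] Suc_eq_plus1)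
  moreover have "(1 / dt)\<^sup>2 * (CS\<^sup>2 * (4 * dt * lyapunov n)) = 4 * CS\<^sup>2 / dt * lyapunov n"
    using dt_pos by (simp add: power2_eq_square field_simps)
  ultimately show ?thesis
    by linarith
qed

definition forcing_max :: "nat \<Rightarrow> real" where
  "forcing_max n = Max ((\<lambda>i. fnrm2 ((1 / dt) *\<^sub>R (f i - f (i - 1)))) ` {2..n + 1})"

lemma forcing_rate_le_max:
  assumes "1 \<le> n"
  shows "forcing_rate n \<le> forcing_max n"
  unfolding forcing_max_def forcing_rate_def
proof (rule Max_ge)
  show "fnrm2 ((1 / dt) *\<^sub>R (f (Suc n) - f n))
      \<in> (\<lambda>i. fnrm2 ((1 / dt) *\<^sub>R (f i - f (i - 1)))) ` {2..n + 1}"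
    using assms by (intro image_eqI[where x = "Suc n"]) auto
qed simp

lemma forcing_max_mono: "1 \<le> n \<Longrightarrow> forcing_max n \<le> forcing_max (Suc n)"
  unfolding forcing_max_def by (rule Max_mono) auto

lemma forcing_max_nonneg: "1 \<le> n \<Longrightarrow> 0 \<le> forcing_max n"
  using forcing_rate_le_max[of n] forcing_rate_nonneg[of n] by linarith

lemma lyapunov_decay:
  assumes "1 \<le> n"
  shows "lyapunov n \<le> decay_rate ^ (n - 1) * lyapunov 1 + Cf * forcing_max n / (1 - decay_rate)"
proof (rule geometric_decay[of lyapunov decay_rate Cf forcing_max, OF _ forcing_max_mono
      forcing_max_nonneg less_imp_le[OF decay_rate_pos] decay_rate_less_1 Cf_nonneg assms])
  fix k :: nat
  assume k: "2 \<le> k"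
  then have "Cf * forcing_rate k \<le> Cf * forcing_max k"
    by (intro mult_left_mono forcing_rate_le_max Cf_nonneg) simp
  then show "lyapunov k \<le> decay_rate * lyapunov (k - 1) + Cf * forcing_max k"
    using lyapunov_contraction[OF k] by linarith
qed

lemma increment_decay:
  "\<exists>C. \<forall>n\<ge>1. nrm2 Ef Ep ((1 / dt) *\<^sub>R (u (n + 1) - u n))
     \<le> C * decay_rate ^ n + C * forcing_max n"
proof (intro exI allI impI)
  define q where "q = 4 * CS\<^sup>2 / dt"
  define C where "C = max (q * lyapunov 1 / decay_rate) (q * Cf / (1 - decay_rate))"
  fix n :: nat
  assume n: "1 \<le> n"
  have "q * lyapunov n \<le> q * (decay_rate ^ (n - 1) * lyapunov 1 + Cf * forcing_max n / (1 - decay_rate))"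
    using lyapunov_decay[OF n] dt_pos by (intro mult_left_mono) (simp_all add: q_def)
  then have "nrm2 Ef Ep ((1 / dt) *\<^sub>R (u (n + 1) - u n))
      \<le> q * (decay_rate ^ (n - 1) * lyapunov 1) + q * Cf / (1 - decay_rate) * forcing_max n"
    using increment_le_lyapunov[of n] unfolding q_def by (simp add: algebra_simps)
  also have "q * (decay_rate ^ (n - 1) * lyapunov 1) = q * lyapunov 1 / decay_rate * decay_rate ^ n"
    using n decay_rate_pos by (cases n) (simp_all add: field_simps)
  also have "\<dots> \<le> C * decay_rate ^ n"
    using decay_rate_pos by (intro mult_right_mono) (simp_all add: C_def)
  also have "q * Cf / (1 - decay_rate) * forcing_max n \<le> C * forcing_max n"
    using forcing_max_nonneg[OF n] by (intro mult_right_mono) (simp_all add: C_def)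
  finally show "nrm2 Ef Ep ((1 / dt) *\<^sub>R (u (n + 1) - u n)) \<le> C * decay_rate ^ n + C * forcing_max n"
    by simp
qed

end

theorem lemma4p1:
  fixes Ef :: "'hf::real_vector \<Rightarrow> 'lf::real_inner"
    and Ep :: "'hp::real_vector \<Rightarrow> 'lp::real_inner"
    and Df :: "'hf \<Rightarrow> 'gf::real_inner"
    and Dp :: "'hp \<Rightarrow> 'gp::real_inner"
    and K :: "'gp \<Rightarrow> 'gp"
    and Tf :: "'hf \<Rightarrow> 'tv::real_inner"
    and Tp :: "'hp \<Rightarrow> 'tp::real_inner"
    and Nn :: "'tv \<Rightarrow> 'tp"
    and Tt :: "'tv \<Rightarrow> 'tt::real_inner"
    and Dv :: "'hf \<Rightarrow> 'q::real_inner"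
    and \<nu> g S \<alpha> \<gamma>f \<gamma>p CS Ctr dt :: real
  assumes lin: "linear Ef" "linear Ep" "linear Df" "linear Dp" "linear Tf" "linear Tp"
      "linear Nn" "linear Tt" "linear Dv"
    and inj: "inj Ef" "inj Ep"
    and K_bl: "bounded_linear K"
    and K_sym: "\<And>x y. K x \<bullet> y = x \<bullet> K y"
    and K_pd: "Kmin K > 0"
    and frame: "\<And>w. (norm (Nn w))\<^sup>2 + (norm (Tt w))\<^sup>2 = (norm w)\<^sup>2"
    and poincare: "\<exists>CP. \<forall>w. nrm2 Ef Ep w \<le> CP * gnrm2 Df Dp w"
    and par: "\<nu> > 0" "g > 0" "S > 0" "\<alpha> > 0" "\<gamma>f \<ge> 0" "\<gamma>p \<ge> 0"
    and CS: "\<And>w. sqrt (nrm2 Ef Ep w) \<le> CS * sqrt (ipS Ef Ep g S w w)"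
    and Ctr1: "\<And>w. sqrt (tnrm2 Tf Tp w) \<le> Ctr * sqrt (sqrt (nrm2 Ef Ep w) * sqrt (gnrm2 Df Dp w))"
    and Ctr2: "\<And>w. sqrt (tnrm2 Tf Tp w) \<le> Ctr * sqrt (gnrm2 Df Dp w)"
    and dt: "0 < dt"
      "dt \<le> (min \<nu> (g * Kmin K)) ^ 3
              / (536 * CS\<^sup>2 * (sqrt 2 * Max {\<gamma>f, \<gamma>p, g}) ^ 4 * Ctr ^ 8)"
  shows "\<exists>lam1. 0 < lam1 \<and> lam1 < 1 \<and>
    (\<forall>(u :: nat \<Rightarrow> 'hf \<times> 'hp) (p :: nat \<Rightarrow> 'q) (f :: nat \<Rightarrow> 'lf \<times> 'lp).
       (\<forall>n\<ge>1. (\<forall>v.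
           ipS Ef Ep g S ((1 / (2 * dt)) *\<^sub>R (3 *\<^sub>R u (n+1) - 4 *\<^sub>R u n + u (n-1))) v
           + aform Df Dp K Tf Tt \<nu> g \<alpha> (u (n+1)) v
           + bform Dv (fst v) (p (n+1))
           + ast Tf Tp Nn \<gamma>f \<gamma>p (u (n+1)) v
           = ipF Ef Ep g (f (n+1)) v
             - (aGam Tf Tp Nn g (2 *\<^sub>R u n - u (n-1)) v
                - ast Tf Tp Nn \<gamma>f \<gamma>p (2 *\<^sub>R u n - u (n-1)) v))
         \<and> (\<forall>q. bform Dv (fst (u (n+1))) q = 0))
       \<longrightarrow> (\<exists>C. \<forall>n\<ge>1.
             nrm2 Ef Ep ((1 / dt) *\<^sub>R (u (n+1) - u n))
               \<le> C * lam1 ^ n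
                  + C * Max ((\<lambda>i. fnrm2 ((1 / dt) *\<^sub>R (f i - f (i-1)))) ` {2..n+1})))"
proof -
  obtain CP where CP: "1 \<le> CP" "\<And>w. nrm2 Ef Ep w \<le> CP * gnrm2 Df Dp w"
    using Poincare_constant_ge_1[OF poincare] by blast
  interpret stokes_darcy Ef Ep Df Dp K Tf Tp Nn Tt \<nu> g S \<alpha> \<gamma>f \<gamma>p CS Ctr CP dt
    by (intro stokes_darcy.intro; (rule lin K_bl K_pd frame par CS Ctr1 Ctr2 CP dt)?)
  have "\<exists>C. \<forall>n\<ge>1. nrm2 Ef Ep ((1 / dt) *\<^sub>R (u (n+1) - u n))
      \<le> C * decay_rate ^ n + C * Max ((\<lambda>i. fnrm2 ((1 / dt) *\<^sub>R (f i - f (i-1)))) ` {2..n+1})"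
    if "bdf2_solution_axioms Ef Ep Df Dp K Tf Tp Nn Tt \<nu> g S \<alpha> \<gamma>f \<gamma>p dt Dv u p f" for u p f
  proof -
    interpret bdf2_solution Ef Ep Df Dp K Tf Tp Nn Tt \<nu> g S \<alpha> \<gamma>f \<gamma>p CS Ctr CP dt Dv u p f
      using stokes_darcy_axioms that by (rule bdf2_solution.intro)
    show ?thesis
      using increment_decay by (simp add: forcing_max_def)
  qed
  then show ?thesis
    using decay_rate_pos decay_rate_less_1 lin(9) unfolding bdf2_solution_axioms_def by blast
qed

end
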